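(* Let $P\subset\mathbb{H}^4$ be the regular right-angled compact hyperbolic $120$-cell. A maximum set of pairwise disjoint walls of $P$ has $24$ elements.
   Context: Use the hyperboloid model $\mathbb{H}^4=\{x\in\mathbb{R}^5:(x,x)=-1,x_0>0\}$ with Minkowski form $(x,y)=-x_0y_0+\sum_{i=1}^4x_iy_i$. The hyperbolic $120$-cell $P$ is the compact regular convex polytope in $\mathbb{H}^4$ with $120$ dodecahedral walls ($3$-dimensional faces), any two intersecting walls meeting at right angles; it is bounded by the $120$ hyperplanes $\vec n^\perp\cap\mathbb{H}^4$ where, with $\tau=(1+\sqrt5)/2$, $\vec n$ ranges over: the $8$ vectors obtained by permuting the last four coordinates of $(\sqrt{2\tau},\pm2,0,0,0)$; the $16$ vectors $(\sqrt{2\tau},\pm1,\pm1,\pm1,\pm1)$; and the $96$ vectors obtained by even permutations of the last four coordinates of $(\sqrt{2\tau},\pm\tau,\pm1,\pm\tau^{-1},0)$. Two walls are disjoint if they do not intersect in $\mathbb{H}^4$. Each wall meets exactly $12$ other walls. *)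

theory Defs
  imports "HOL-Analysis.Analysis" "HOL-Combinatorics.Permutations"
begin

text \<open>Points of R^5 are \<open>real^5\<close>; coordinate x_0 is component 1, x_1..x_4 are components 2..5.\<close>

definition mink :: "real^5 \<Rightarrow> real^5 \<Rightarrow> real" where
  "mink x y = - (x$1 * y$1) + x$2 * y$2 + x$3 * y$3 + x$4 * y$4 + x$5 * y$5"

definition H4 :: "(real^5) set" where
  "H4 = {x. mink x x = -1 \<and> x$1 > 0}"

definition tau :: real where "tau = (1 + sqrt 5) / 2"

definition mk :: "real \<Rightarrow> real list \<Rightarrow> real^5" where
  "mk a xs = vector [a, xs!0, xs!1, xs!2, xs!3]"

definition normals :: "(real^5) set" where
  "normals =
     {mk (sqrt (2*tau)) xs | xs s. s \<in> {-1,1} \<and> mset xs = mset [s*2, 0, 0, 0]}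
   \<union> {mk (sqrt (2*tau)) [a,b,c,d] | a b c d. a \<in> {-1,1} \<and> b \<in> {-1,1} \<and> c \<in> {-1,1} \<and> d \<in> {-1,1}}
   \<union> {mk (sqrt (2*tau)) (permute_list p [s1*tau, s2, s3/tau, 0]) | p s1 s2 s3.
        p permutes {..<4} \<and> evenperm p \<and> s1 \<in> {-1,1} \<and> s2 \<in> {-1,1} \<and> s3 \<in> {-1,1}}"

text \<open>The 120-cell: the intersection of the half-spaces containing the centre (1,0,0,0,0).\<close>
definition cell120 :: "(real^5) set" where
  "cell120 = {x \<in> H4. \<forall>n \<in> normals. mink x n \<le> 0}"

definition wall :: "real^5 \<Rightarrow> (real^5) set" where
  "wall n = {x \<in> cell120. mink x n = 0}"

definition walls :: "(real^5) set set" where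
  "walls = wall ` normals"

definition pairwise_disjoint_walls :: "(real^5) set set \<Rightarrow> bool" where
  "pairwise_disjoint_walls W \<longleftrightarrow> W \<subseteq> walls \<and> (\<forall>A\<in>W. \<forall>B\<in>W. A \<noteq> B \<longrightarrow> A \<inter> B = {})"

end

theory Submission
  imports Defs
begin

section \<open>The golden ratio and the ring \<open>\<int>[\<tau>]\<close>\<close>

lemma tau_bounds: "1.6 < tau" "tau < 1.7"
proof -
  have "2.2 < sqrt 5"
    by (rule real_less_rsqrt) (simp add: power2_eq_square)
  moreover have "sqrt 5 < 2.4"
    by (rule real_less_lsqrt) (simp_all add: power2_eq_square)
  ultimately show "1.6 < tau" "tau < 1.7"
    unfolding tau_def by simp_all
qed

lemma tau_squared: "tau * tau = tau + 1"
  unfolding tau_def by (simp add: field_simps)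

lemma inverse_tau: "1 / tau = tau - 1"
  using tau_squared tau_bounds by (simp add: field_simps)

type_synonym zgold = "int \<times> int"

fun gold :: "zgold \<Rightarrow> real" where
  "gold (a, b) = of_int a + of_int b * tau"

fun gmul :: "zgold \<Rightarrow> zgold \<Rightarrow> zgold" where
  "gmul (a, b) (c, d) = (a * c + b * d, a * d + b * c + b * d)"

fun gscale :: "int \<Rightarrow> zgold \<Rightarrow> zgold" where
  "gscale s (a, b) = (s * a, s * b)"

lemma gold_add [simp]: "gold (x + y) = gold x + gold y"
  by (cases x; cases y) (simp add: algebra_simps)

lemma gold_zero [simp]: "gold 0 = 0"
  by (simp add: zero_prod_def)

lemma gold_sum_list: "gold (sum_list xs) = sum_list (map gold xs)"
  by (induction xs) simp_all

lemma gold_gmul [simp]: "gold (gmul x y) = gold x * gold y"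
proof (cases x; cases y)
  fix a b c d assume xy: "x = (a, b)" "y = (c, d)"
  have "gold x * gold y = a * c + (a * d + b * c) * tau + b * d * (tau * tau)"
    unfolding xy by (simp add: algebra_simps)
  then show ?thesis
    unfolding xy tau_squared by (simp add: algebra_simps)
qed

lemma gold_gscale [simp]: "gold (gscale s x) = of_int s * gold x"
  by (cases x) (simp add: algebra_simps)

lemma gscale_1 [simp]: "gscale 1 x = x"
  by (cases x) simp

lemma gscale_gscale [simp]: "gscale s (gscale t x) = gscale (s * t) x"
  by (cases x) simp

lemma gmul_gscale_gscale: "gmul (gscale s x) (gscale t y) = gscale (s * t) (gmul x y)"
  by (cases x; cases y) (simp add: algebra_simps)

text \<open>A certificate for \<open>gold d \<le> 2\<close> that only uses \<open>1.6 < \<tau> < 1.7\<close>.\<close>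

definition gold_le_2_cert :: "zgold \<Rightarrow> bool" where
  "gold_le_2_cert d \<longleftrightarrow>
     (if snd d \<ge> 0 then 10 * fst d + 17 * snd d \<le> 20 else 5 * fst d + 8 * snd d \<le> 10)"

lemma gold_le_2_certD:
  assumes "gold_le_2_cert d"
  shows "gold d \<le> 2"
proof (cases d)
  case (Pair a b)
  show ?thesis
  proof (cases "b \<ge> 0")
    case True
    then have "of_int b * tau \<le> of_int b * 1.7"
      using tau_bounds by (intro mult_left_mono) auto
    moreover have "10 * of_int a + 17 * of_int b \<le> (20::real)"
      using assms True unfolding gold_le_2_cert_def Pair by simp
    ultimately show ?thesis
      using Pair by simp
  next
    case False
    then have "of_int b * tau \<le> of_int b * 1.6"
      using tau_bounds by (intro mult_left_mono_neg) auto
    moreover have "5 * of_int a + 8 * of_int b \<le> (10::real)"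
      using assms False unfolding gold_le_2_cert_def Pair by simp
    ultimately show ?thesis
      using Pair by simp
  qed
qed

lemma card_evenperm:
  assumes S: "finite S" and ab: "a \<in> S" "b \<in> S" "a \<noteq> b"
  shows "2 * card {p. p permutes S \<and> evenperm p} = fact (card S)"
proof -
  let ?E = "{p. p permutes S \<and> evenperm p}" and ?O = "{p. p permutes S \<and> \<not> evenperm p}"
  define t where "t = Transposition.transpose a b"
  have t: "t permutes S" "\<not> evenperm t" "permutation t"
    unfolding t_def using ab by (simp_all add: permutes_swap_id evenperm_swap permutation_swap_id)
  have parity: "evenperm (t \<circ> p) \<longleftrightarrow> \<not> evenperm p" if "p permutes S" for p
  proof -
    have "permutation p"
      unfolding permutation_permutes using that S by blast
    then show ?thesis
      using evenperm_comp[OF t(3)] t(2) by simp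
  qed
  have tt: "t \<circ> (t \<circ> p) = p" for p :: "'a \<Rightarrow> 'a"
    unfolding t_def by (simp add: fun_eq_iff)
  have "bij_betw ((\<circ>) t) ?E ?O"
    by (rule bij_betw_byWitness[where f' = "(\<circ>) t"]) (auto simp: tt parity permutes_compose[OF _ t(1)])
  then have "card ?E = card ?O"
    by (rule bij_betw_same_card)
  have "finite ?E" "finite ?O"
    using finite_permutations[OF S] by (auto intro: rev_finite_subset)
  have "fact (card S) = card (?E \<union> ?O)"
    by (rule trans[OF card_permutations[OF refl S, symmetric]], rule arg_cong[where f = card]) auto
  also have "\<dots> = card ?E + card ?O"
    using \<open>finite ?E\<close> \<open>finite ?O\<close> by (intro card_Un_disjoint) auto
  finally show ?thesis
    using \<open>card ?E = card ?O\<close> by simp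
qed

definition alt4 :: "(nat \<Rightarrow> nat) set" where
  "alt4 = {p. p permutes {..<4} \<and> evenperm p}"

definition alt4_words :: "(nat \<times> nat) list list" where
  "alt4_words =
     [[], [(0,1),(2,3)], [(0,2),(1,3)], [(0,3),(1,2)],
      [(0,1),(1,2)], [(1,2),(0,1)], [(0,1),(1,3)], [(1,3),(0,1)],
      [(0,2),(2,3)], [(2,3),(0,2)], [(1,2),(2,3)], [(2,3),(1,2)]]"

lemma alt4_eq: "alt4 = apply_transps ` set alt4_words"
proof (rule card_subset_eq[symmetric])
  show "finite alt4"
    unfolding alt4_def using finite_permutations[of "{..<4::nat}"] by (auto intro: rev_finite_subset)
  have "apply_transps w \<in> alt4" if "w \<in> set alt4_words" for w
  proof -
    have "\<forall>(a, b)\<in>set w. a \<noteq> b \<and> a \<in> {..<4} \<and> b \<in> {..<4}" "even (length w)"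
      using that by (auto simp: alt4_words_def)
    then show ?thesis
      unfolding alt4_def
      by (auto simp: permutes_apply_transps evenperm_apply_transps_iff case_prod_unfold)
  qed
  then show "apply_transps ` set alt4_words \<subseteq> alt4"
    by blast
  have "distinct (map ((\<lambda>p. map p [0..<4]) \<circ> apply_transps) alt4_words)"
    by code_simp
  then have "distinct (map apply_transps alt4_words)"
    by (simp only: map_map[symmetric] distinct_map)
  then have "card (apply_transps ` set alt4_words) = 12"
    by (simp add: distinct_card[symmetric] alt4_words_def)
  moreover have "card alt4 = 12"
    using card_evenperm[of "{..<4::nat}" 0 1] unfolding alt4_def by (simp add: fact_numeral)
  ultimately show "card (apply_transps ` set alt4_words) = card alt4"
    by simp
qed

lemma alt4_permutes: "p \<in> alt4 \<Longrightarrow> p permutes {..<4}"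
  unfolding alt4_def by simp

lemma alt4_permutation: "p \<in> alt4 \<Longrightarrow> permutation p"
  unfolding alt4_def permutation_permutes by blast

lemma alt4_comp: "p \<in> alt4 \<Longrightarrow> q \<in> alt4 \<Longrightarrow> q \<circ> p \<in> alt4"
  using evenperm_comp[OF alt4_permutation alt4_permutation, of q p]
  unfolding alt4_def by (auto simp: permutes_compose)

lemma alt4_inv: "p \<in> alt4 \<Longrightarrow> inv p \<in> alt4"
  using evenperm_inv[OF alt4_permutation, of p] unfolding alt4_def by (auto simp: permutes_inv)

definition signs4 :: "int list list" where
  "signs4 = List.n_lists 4 [1, -1]"

lemma signs4_iff: "\<sigma> \<in> set signs4 \<longleftrightarrow> length \<sigma> = 4 \<and> set \<sigma> \<subseteq> {1, -1}"
  by (auto simp: signs4_def set_n_lists)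

lemma signs4_nth:
  assumes "\<sigma> \<in> set signs4" "i < 4"
  shows "\<sigma> ! i \<in> {1, -1}"
proof -
  have "\<sigma> ! i \<in> set \<sigma>"
    using assms by (simp add: signs4_iff)
  then show ?thesis
    using assms(1) signs4_iff by blast
qed

lemma signs4_mult:
  assumes "\<sigma> \<in> set signs4" "\<tau> \<in> set signs4"
  shows "map2 (*) \<sigma> \<tau> \<in> set signs4"
proof -
  have "x * y \<in> {1, -1}" if "(x, y) \<in> set (zip \<sigma> \<tau>)" for x y
  proof -
    have "x \<in> {1, -1}" "y \<in> {1, -1}"
      using assms set_zip_leftD[OF that] set_zip_rightD[OF that] by (auto simp: signs4_iff)
    then show ?thesis
      by auto
  qed
  then show ?thesis
    using assms by (auto simp: signs4_iff)
qed

definition sperm :: "(nat \<Rightarrow> nat) \<Rightarrow> int list \<Rightarrow> zgold list \<Rightarrow> zgold list" where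
  "sperm p \<sigma> v = map2 gscale \<sigma> (permute_list p v)"

lemma length_sperm [simp]: "length (sperm p \<sigma> v) = min (length \<sigma>) (length v)"
  by (simp add: sperm_def)

lemma nth_sperm:
  "p permutes {..<length v} \<Longrightarrow> i < length \<sigma> \<Longrightarrow> i < length v \<Longrightarrow>
     sperm p \<sigma> v ! i = gscale (\<sigma> ! i) (v ! p i)"
  by (simp add: sperm_def permute_list_nth)

lemma sperm_sperm:
  assumes p: "p permutes {..<length v}" and q: "q permutes {..<length v}"
    and len: "length \<sigma> = length v" "length \<tau> = length v"
  shows "sperm p \<sigma> (sperm q \<tau> v) = sperm (q \<circ> p) (map2 (*) \<sigma> (permute_list p \<tau>)) v"
proof (rule nth_equalityI)
  show "length (sperm p \<sigma> (sperm q \<tau> v)) = length (sperm (q \<circ> p) (map2 (*) \<sigma> (permute_list p \<tau>)) v)"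
    using len by simp
  fix i assume "i < length (sperm p \<sigma> (sperm q \<tau> v))"
  then have i: "i < length v"
    using len by simp
  have pi: "p i < length v"
    using permutes_in_image[OF p] i by simp
  have qp: "q \<circ> p permutes {..<length v}"
    using p q by (rule permutes_compose)
  have "sperm p \<sigma> (sperm q \<tau> v) ! i = gscale (\<sigma> ! i) (sperm q \<tau> v ! p i)"
    using p i len by (intro nth_sperm) simp_all
  also have "\<dots> = gscale (\<sigma> ! i * \<tau> ! p i) (v ! q (p i))"
    using q pi len by (simp add: nth_sperm)
  also have "\<dots> = sperm (q \<circ> p) (map2 (*) \<sigma> (permute_list p \<tau>)) v ! i"
    using qp i len p by (simp add: nth_sperm permute_list_nth)
  finally show "sperm p \<sigma> (sperm q \<tau> v) ! i = sperm (q \<circ> p) (map2 (*) \<sigma> (permute_list p \<tau>)) v ! i" .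
qed

definition gdot :: "zgold list \<Rightarrow> zgold list \<Rightarrow> zgold" where
  "gdot v w = sum_list (map2 gmul v w)"

lemma sum_list_permute_list:
  assumes "p permutes {..<length xs}"
  shows "sum_list (permute_list p xs) = sum_list (xs :: 'a :: comm_monoid_add list)"
proof -
  have "sum_list (permute_list p xs) = sum_mset (mset (permute_list p xs))"
    by (simp only: sum_mset_sum_list)
  also have "\<dots> = sum_mset (mset xs)"
    using assms by simp
  finally show ?thesis
    by (simp only: sum_mset_sum_list)
qed

lemma gdot_sperm:
  assumes p: "p permutes {..<length v}" and len: "length w = length v" "length \<sigma> = length v"
    and signs: "set \<sigma> \<subseteq> {1, -1}"
  shows "gdot (sperm p \<sigma> v) (sperm p \<sigma> w) = gdot v w"
proof -
  have "map2 gmul (sperm p \<sigma> v) (sperm p \<sigma> w) = permute_list p (map2 gmul v w)"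
  proof (rule nth_equalityI)
    show "length (map2 gmul (sperm p \<sigma> v) (sperm p \<sigma> w)) = length (permute_list p (map2 gmul v w))"
      using len by simp
    fix i assume "i < length (map2 gmul (sperm p \<sigma> v) (sperm p \<sigma> w))"
    then have i: "i < length v"
      using len by simp
    have "\<sigma> ! i \<in> set \<sigma>"
      using i len by simp
    with signs have sq: "\<sigma> ! i * \<sigma> ! i = 1"
      by auto
    have pi: "p i < length v"
      using permutes_in_image[OF p] i by simp
    have "map2 gmul (sperm p \<sigma> v) (sperm p \<sigma> w) ! i = gmul (gscale (\<sigma> ! i) (v ! p i)) (gscale (\<sigma> ! i) (w ! p i))"
      using p i len by (simp add: nth_sperm)
    also have "\<dots> = gmul (v ! p i) (w ! p i)"
      by (simp add: gmul_gscale_gscale sq)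
    also have "\<dots> = permute_list p (map2 gmul v w) ! i"
      using p i pi len by (simp add: permute_list_nth)
    finally show "map2 gmul (sperm p \<sigma> v) (sperm p \<sigma> w) ! i = permute_list p (map2 gmul v w) ! i" .
  qed
  then show ?thesis
    unfolding gdot_def using p len by (simp add: sum_list_permute_list)
qed

definition symmetries :: "(zgold list \<Rightarrow> zgold list) set" where
  "symmetries = {sperm p \<sigma> | p \<sigma>. p \<in> alt4 \<and> \<sigma> \<in> set signs4}"

definition orbits :: "zgold list list \<Rightarrow> zgold list set" where
  "orbits bs = {g b | g b. g \<in> symmetries \<and> b \<in> set bs}"

definition orbits_list :: "zgold list list \<Rightarrow> zgold list list" where
  "orbits_list bs = [sperm (apply_transps w) \<sigma> b. b \<leftarrow> bs, w \<leftarrow> alt4_words, \<sigma> \<leftarrow> signs4]"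

lemma set_orbits_list: "set (orbits_list bs) = orbits bs"
  unfolding orbits_list_def orbits_def symmetries_def alt4_eq by fastforce

lemma finite_orbits: "finite (orbits bs)"
  unfolding set_orbits_list[symmetric] by simp

lemma length_orbits: "\<forall>b\<in>set bs. length b = 4 \<Longrightarrow> v \<in> orbits bs \<Longrightarrow> length v = 4"
  unfolding orbits_def symmetries_def by (auto simp: signs4_iff)

lemma gdot_symmetry:
  assumes "g \<in> symmetries" "length x = 4" "length y = 4"
  shows "gdot (g x) (g y) = gdot x y"
  using assms unfolding symmetries_def
  by (auto intro!: gdot_sperm simp: alt4_permutes signs4_iff)

lemma symmetry_comp: "g \<in> symmetries \<Longrightarrow> h \<in> symmetries \<Longrightarrow> length x = 4 \<Longrightarrow> \<exists>k\<in>symmetries. g (h x) = k x"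
proof -
  assume "g \<in> symmetries" "h \<in> symmetries" and len: "length x = 4"
  then obtain p \<sigma> q \<tau> where p: "p \<in> alt4" and \<sigma>: "\<sigma> \<in> set signs4" and g: "g = sperm p \<sigma>"
    and q: "q \<in> alt4" and \<tau>: "\<tau> \<in> set signs4" and h: "h = sperm q \<tau>"
    unfolding symmetries_def by blast
  have "g (h x) = sperm (q \<circ> p) (map2 (*) \<sigma> (permute_list p \<tau>)) x"
    unfolding g h using p q \<sigma> \<tau> len
    by (intro sperm_sperm) (simp_all add: alt4_permutes signs4_iff)
  moreover have "permute_list p \<tau> \<in> set signs4"
    using p \<tau> by (simp add: signs4_iff alt4_permutes)
  ultimately show ?thesis
    unfolding symmetries_def using alt4_comp[OF p q] signs4_mult[OF \<sigma>] by blast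
qed

lemma inj_on_symmetry:
  assumes "g \<in> symmetries"
  shows "inj_on g {v. length v = 4}"
proof (rule inj_onI)
  obtain p \<sigma> where p: "p \<in> alt4" and \<sigma>: "\<sigma> \<in> set signs4" and g: "g = sperm p \<sigma>"
    using assms unfolding symmetries_def by blast
  fix v w assume v: "v \<in> {v. length v = 4}" and w: "w \<in> {v. length v = 4}" and eq: "g v = g w"
  show "v = w"
  proof (rule nth_equalityI)
    show "length v = length w"
      using v w by simp
    fix j assume "j < length v"
    then have j: "j < 4"
      using v by simp
    have pp: "p permutes {..<4}"
      using p by (rule alt4_permutes)
    define i where "i = inv p j"
    have i: "i < 4" and pi: "p i = j"
      unfolding i_def using j permutes_inv[OF pp] permutes_inverses(1)[OF pp]
      by (auto dest: permutes_in_image)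
    have "gscale (\<sigma> ! i) (v ! j) = gscale (\<sigma> ! i) (w ! j)"
      using eq nth_sperm[of p v i \<sigma>] nth_sperm[of p w i \<sigma>] pp v w i \<sigma> pi
      by (simp add: g signs4_iff)
    then have "gscale (\<sigma> ! i * \<sigma> ! i) (v ! j) = gscale (\<sigma> ! i * \<sigma> ! i) (w ! j)"
      by (metis gscale_gscale)
    moreover have "\<sigma> ! i * \<sigma> ! i = 1"
      using signs4_nth[OF \<sigma> i] by auto
    ultimately show "v ! j = w ! j"
      by simp
  qed
qed

lemma symmetry_orbits:
  assumes g: "g \<in> symmetries" and bs: "\<forall>b\<in>set bs. length b = 4"
  shows "g ` orbits bs = orbits bs"
proof (rule endo_inj_surj)
  show "g ` orbits bs \<subseteq> orbits bs"
  proof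
    fix v assume "v \<in> g ` orbits bs"
    then obtain h b where "h \<in> symmetries" "b \<in> set bs" "v = g (h b)"
      unfolding orbits_def by blast
    then show "v \<in> orbits bs"
      using symmetry_comp[OF g] bs unfolding orbits_def by blast
  qed
  show "inj_on g (orbits bs)"
    using inj_on_subset[OF inj_on_symmetry[OF g]] length_orbits[OF bs] by blast
qed (rule finite_orbits)

text \<open>A pair \<open>(a, b)\<close> stands for \<open>a + b\<tau>\<close>; as \<open>1/\<tau> = \<tau> - 1\<close>, these are the first members of the three
  families of normals.\<close>

definition zbase_A :: "zgold list" where "zbase_A = [(2,0), (0,0), (0,0), (0,0)]"
definition zbase_B :: "zgold list" where "zbase_B = [(1,0), (1,0), (1,0), (1,0)]"
definition zbase_C :: "zgold list" where "zbase_C = [(0,1), (1,0), (-1,1), (0,0)]"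

definition zadj :: "zgold list \<Rightarrow> zgold list \<Rightarrow> bool" where
  "zadj v w \<longleftrightarrow> gdot v w = (0, 2)"

fun no_independent :: "('a \<Rightarrow> 'a \<Rightarrow> bool) \<Rightarrow> nat \<Rightarrow> 'a list \<Rightarrow> bool" where
  "no_independent R 0 xs \<longleftrightarrow> False"
| "no_independent R (Suc k) xs \<longleftrightarrow> (\<forall>x\<in>set xs. no_independent R k (filter (\<lambda>y. y \<noteq> x \<and> \<not> R x y) xs))"

lemma card_independent_less:
  assumes "no_independent R k xs" "T \<subseteq> set xs" "\<forall>a\<in>T. \<forall>b\<in>T. a \<noteq> b \<longrightarrow> \<not> R a b"
  shows "card T < k"
  using assms
proof (induction k arbitrary: xs T)
  case (Suc k)
  show ?case
  proof (cases "T = {}")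
    case False
    then obtain x where x: "x \<in> T"
      by blast
    have "T - {x} \<subseteq> set (filter (\<lambda>y. y \<noteq> x \<and> \<not> R x y) xs)"
      using Suc.prems x by auto
    moreover have "no_independent R k (filter (\<lambda>y. y \<noteq> x \<and> \<not> R x y) xs)"
      using Suc.prems(1,2) x by auto
    ultimately have "card (T - {x}) < k"
      using Suc.IH Suc.prems(3) by blast
    moreover have "finite T"
      using Suc.prems(2) finite_subset by blast
    ultimately show ?thesis
      using x by (simp add: card_Diff_singleton_if split: if_splits)
  qed simp
qed simp

definition znormals :: "zgold list set" where
  "znormals = orbits [zbase_A, zbase_B, zbase_C]"

definition z24 :: "zgold list set" where
  "z24 = orbits [zbase_A, zbase_B]"

lemma card_z24: "card z24 = 24"
  unfolding z24_def set_orbits_list[symmetric] by code_simp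

lemma card_znormals: "card znormals \<le> 120"
proof -
  have "card (orbits [zbase_C]) = 96"
    unfolding set_orbits_list[symmetric] by code_simp
  moreover have "znormals = z24 \<union> orbits [zbase_C]"
    unfolding znormals_def z24_def orbits_def by auto
  ultimately show ?thesis
    using card_Un_le[of z24 "orbits [zbase_C]"] card_z24 by simp
qed

text \<open>The checks below apply named predicates to computed values, so that \<open>code_simp\<close>, which
  rewrites arguments first, evaluates each \<^const>\<open>gdot\<close> only once.\<close>

definition orthogonal_or_apart :: "zgold \<Rightarrow> bool" where
  "orthogonal_or_apart d \<longleftrightarrow> d = (0, 2) \<or> gold_le_2_cert d"

definition neighbourhood_ok :: "zgold list list \<Rightarrow> bool" where
  "neighbourhood_ok nb \<longleftrightarrow> length nb = 12 \<and> no_independent zadj 4 nb"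

lemma gdot_rows:
  "\<forall>b\<in>set [zbase_A, zbase_B, zbase_C]. \<forall>x\<in>set (orbits_list [zbase_A, zbase_B, zbase_C]).
     x = b \<or> orthogonal_or_apart (gdot b x)"
  by code_simp

lemma gdot_rows_24:
  "\<forall>b\<in>set [zbase_A, zbase_B]. \<forall>x\<in>set (orbits_list [zbase_A, zbase_B]). x = b \<or> gold_le_2_cert (gdot b x)"
  by code_simp

lemma neighbour_rows:
  "\<forall>b\<in>set [zbase_A, zbase_B, zbase_C].
     neighbourhood_ok (remdups (filter (zadj b) (orbits_list [zbase_A, zbase_B, zbase_C])))"
  by code_simp

lemma length_zbase [simp]: "length zbase_A = 4" "length zbase_B = 4" "length zbase_C = 4"
  by (simp_all add: zbase_A_def zbase_B_def zbase_C_def)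

lemma length_zbases: "\<forall>b\<in>set [zbase_A, zbase_B, zbase_C]. length b = 4"
  by simp

lemma length_znormals: "v \<in> znormals \<Longrightarrow> length v = 4"
  using length_orbits[OF length_zbases] unfolding znormals_def .

lemma z24_subset: "z24 \<subseteq> znormals"
  unfolding z24_def znormals_def orbits_def by auto

lemma znormals_cases:
  assumes v: "v \<in> znormals" and w: "w \<in> znormals"
  shows "v = w \<or> zadj v w \<or> gold_le_2_cert (gdot v w)"
proof -
  obtain b g where b: "b \<in> set [zbase_A, zbase_B, zbase_C]" and g: "g \<in> symmetries" and vb: "v = g b"
    using v unfolding znormals_def orbits_def by blast
  obtain x where x: "x \<in> znormals" and wx: "w = g x"
    using w symmetry_orbits[OF g length_zbases] unfolding znormals_def by blast
  have lb: "length b = 4" and lx: "length x = 4"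
    using b length_zbases length_znormals[OF x] by auto
  have "x = b \<or> zadj b x \<or> gold_le_2_cert (gdot b x)"
    using gdot_rows b x unfolding znormals_def set_orbits_list orthogonal_or_apart_def zadj_def by blast
  then show ?thesis
    unfolding vb wx zadj_def gdot_symmetry[OF g lb lx] by auto
qed

lemma z24_cases:
  assumes v: "v \<in> z24" and w: "w \<in> z24"
  shows "v = w \<or> gold_le_2_cert (gdot v w)"
proof -
  have bs: "\<forall>b\<in>set [zbase_A, zbase_B]. length b = 4"
    using length_zbases by simp
  obtain b g where b: "b \<in> set [zbase_A, zbase_B]" and g: "g \<in> symmetries" and vb: "v = g b"
    using v unfolding z24_def orbits_def by blast
  obtain x where x: "x \<in> z24" and wx: "w = g x"
    using w symmetry_orbits[OF g bs] unfolding z24_def by blast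
  have lb: "length b = 4" and lx: "length x = 4"
    using b bs length_znormals x z24_subset by auto
  have "x = b \<or> gold_le_2_cert (gdot b x)"
    using gdot_rows_24 b x unfolding z24_def set_orbits_list by blast
  then show ?thesis
    unfolding vb wx gdot_symmetry[OF g lb lx] by auto
qed

lemma gdot_znormals_self:
  assumes v: "v \<in> znormals"
  shows "gdot v v = (4, 0)"
proof -
  obtain b g where b: "b \<in> set [zbase_A, zbase_B, zbase_C]" and g: "g \<in> symmetries" and vb: "v = g b"
    using v unfolding znormals_def orbits_def by blast
  have lb: "length b = 4"
    using b length_zbases by auto
  show ?thesis
    unfolding vb gdot_symmetry[OF g lb lb] using b
    by (auto simp: gdot_def zbase_A_def zbase_B_def zbase_C_def)
qed

lemma zneighbours:
  assumes v: "v \<in> znormals"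
  shows "card {w \<in> znormals. zadj v w} = 12"
    and "\<And>T. T \<subseteq> {w \<in> znormals. zadj v w} \<Longrightarrow> \<forall>a\<in>T. \<forall>c\<in>T. \<not> zadj a c \<Longrightarrow> card T \<le> 3"
proof -
  obtain b g where b: "b \<in> set [zbase_A, zbase_B, zbase_C]" and g: "g \<in> symmetries" and vb: "v = g b"
    using v unfolding znormals_def orbits_def by blast
  have lb: "length b = 4"
    using b length_zbases by auto
  have X: "g ` znormals = znormals"
    using symmetry_orbits[OF g length_zbases] unfolding znormals_def .
  let ?N = "{x \<in> znormals. zadj b x}"
  let ?nb = "remdups (filter (zadj b) (orbits_list [zbase_A, zbase_B, zbase_C]))"
  have N: "?N = set ?nb"
    by (simp only: set_remdups set_filter set_orbits_list znormals_def)
  have inj_N: "inj_on g ?N"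
    by (rule inj_on_subset[OF inj_on_symmetry[OF g]]) (auto dest: length_znormals)
  have zadj_g: "zadj (g b) (g x) \<longleftrightarrow> zadj b x" if "x \<in> znormals" for x
    unfolding zadj_def using gdot_symmetry[OF g lb length_znormals[OF that]] by simp
  have image: "{w \<in> znormals. zadj v w} = g ` ?N"
  proof
    show "{w \<in> znormals. zadj v w} \<subseteq> g ` ?N"
    proof
      fix w assume w: "w \<in> {w \<in> znormals. zadj v w}"
      then obtain x where x: "x \<in> znormals" "w = g x"
        using X by blast
      then have "zadj b x"
        using w zadj_g[OF x(1)] unfolding vb by simp
      then show "w \<in> g ` ?N"
        using x by blast
    qed
    show "g ` ?N \<subseteq> {w \<in> znormals. zadj v w}"
      using X zadj_g unfolding vb by blast
  qed
  have "neighbourhood_ok ?nb"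
    using neighbour_rows b by blast
  then have "length ?nb = 12" and nb: "no_independent zadj 4 ?nb"
    unfolding neighbourhood_ok_def by blast+
  moreover have "card (set ?nb) = length ?nb"
    by (rule distinct_card) (rule distinct_remdups)
  ultimately have "card (set ?nb) = 12"
    by simp
  have "card {w \<in> znormals. zadj v w} = card ?N"
    unfolding image by (rule card_image[OF inj_N])
  then show "card {w \<in> znormals. zadj v w} = 12"
    using \<open>card (set ?nb) = 12\<close> N by simp
  fix T assume T: "T \<subseteq> {w \<in> znormals. zadj v w}" and ind: "\<forall>a\<in>T. \<forall>c\<in>T. \<not> zadj a c"
  define T' where "T' = {x \<in> ?N. g x \<in> T}"
  have "T = g ` T'"
    using T unfolding image T'_def by blast
  moreover have "card T' < 4"
  proof (rule card_independent_less)
    show "no_independent zadj 4 ?nb"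
      by (rule nb)
    show "T' \<subseteq> set ?nb"
      unfolding T'_def N by blast
    have "zadj (g x) (g y) \<longleftrightarrow> zadj x y" if "x \<in> znormals" "y \<in> znormals" for x y
      unfolding zadj_def using gdot_symmetry[OF g] length_znormals that by simp
    then show "\<forall>a\<in>T'. \<forall>c\<in>T'. a \<noteq> c \<longrightarrow> \<not> zadj a c"
      using ind unfolding T'_def by auto
  qed
  moreover have "finite T'"
    using finite_orbits[of "[zbase_A, zbase_B, zbase_C]"] unfolding T'_def znormals_def
    by (auto intro: rev_finite_subset)
  ultimately show "card T \<le> 3"
    using card_image_le[of T' g] by simp
qed

lemma gmul_commute: "gmul x y = gmul y x"
  by (cases x; cases y) (simp add: algebra_simps)

lemma gdot_commute: "gdot v w = gdot w v"
  unfolding gdot_def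
proof (induction v arbitrary: w)
  case (Cons x v)
  then show ?case
    by (cases w) (simp_all add: gmul_commute)
qed simp

lemma zadj_commute: "zadj v w \<longleftrightarrow> zadj w v"
  unfolding zadj_def by (simp add: gdot_commute)

section \<open>The normals of the 120-cell\<close>

lemma mk_nth [simp]:
  "mk a xs $ 1 = a" "mk a xs $ 2 = xs ! 0" "mk a xs $ 3 = xs ! 1" "mk a xs $ 4 = xs ! 2" "mk a xs $ 5 = xs ! 3"
  unfolding mk_def vector_def by simp_all

lemma length_4_cases:
  assumes "length xs = 4"
  obtains a b c d where "xs = [a, b, c, d]"
  using assms by (auto simp: numeral_eq_Suc length_Suc_conv)

definition embed :: "zgold list \<Rightarrow> real^5" where
  "embed v = mk (sqrt (2 * tau)) (map gold v)"

lemma mink_embed: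
  assumes "length v = 4" "length w = 4"
  shows "mink (embed v) (embed w) = gold (gdot v w) - 2 * tau"
proof -
  obtain a b c d a' b' c' d' where "v = [a, b, c, d]" "w = [a', b', c', d']"
    using assms by (metis length_4_cases)
  moreover have "sqrt (2 * tau) * sqrt (2 * tau) = 2 * tau"
    using tau_bounds by simp
  ultimately show ?thesis
    by (simp add: mink_def embed_def gdot_def gold_sum_list)
qed

definition rsign :: "int list \<Rightarrow> real list \<Rightarrow> real list" where
  "rsign \<sigma> xs = map2 (\<lambda>s x. of_int s * x) \<sigma> xs"

lemma permute_list_rsign:
  assumes "p permutes {..<length xs}" "length \<sigma> = length xs"
  shows "permute_list p (rsign \<sigma> xs) = rsign (permute_list p \<sigma>) (permute_list p xs)"
  unfolding rsign_def using assms by (simp add: permute_list_map permute_list_zip)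

lemma permute_list_inv:
  assumes "p permutes {..<length xs}"
  shows "permute_list p (permute_list (inv p) xs) = xs"
  using permute_list_compose[OF assms, of "inv p"] permutes_inv_o(2)[OF assms] by simp

lemma permute_list_signs4:
  "p permutes {..<4} \<Longrightarrow> \<sigma> \<in> set signs4 \<Longrightarrow> permute_list p \<sigma> \<in> set signs4"
  by (simp add: signs4_iff)

lemma map_gold_sperm:
  assumes p: "p permutes {..<length b}" and len: "length \<sigma> = length b"
  shows "map gold (sperm p \<sigma> b) = rsign \<sigma> (permute_list p (map gold b))"
proof (rule nth_equalityI)
  fix i assume "i < length (map gold (sperm p \<sigma> b))"
  then have i: "i < length b"
    using len by simp
  moreover have "p i < length b"
    using permutes_in_image[OF p] i by simp
  ultimately show "map gold (sperm p \<sigma> b) ! i = rsign \<sigma> (permute_list p (map gold b)) ! i"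
    using p len by (simp add: sperm_def rsign_def permute_list_nth)
qed (simp add: len rsign_def sperm_def)

text \<open>Signs may be applied before or after the permutation; the families in the definition of
  \<^const>\<open>normals\<close> apply them before.\<close>

lemma embed_orbits:
  assumes b: "length b = 4"
  shows "embed ` orbits [b] =
    {mk (sqrt (2 * tau)) (permute_list p (rsign \<sigma> (map gold b))) | p \<sigma>. p \<in> alt4 \<and> \<sigma> \<in> set signs4}"
    (is "_ = ?F")
proof (intro set_eqI iffI)
  fix x assume "x \<in> embed ` orbits [b]"
  then obtain p \<sigma> where p: "p \<in> alt4" and \<sigma>: "\<sigma> \<in> set signs4" and x: "x = embed (sperm p \<sigma> b)"
    unfolding orbits_def symmetries_def by auto
  have pp: "p permutes {..<4}"
    using p by (rule alt4_permutes)
  let ?\<sigma> = "permute_list (inv p) \<sigma>"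
  have "x = mk (sqrt (2 * tau)) (rsign \<sigma> (permute_list p (map gold b)))"
    unfolding x embed_def using map_gold_sperm pp b \<sigma> by (simp add: signs4_iff)
  also have "\<dots> = mk (sqrt (2 * tau)) (permute_list p (rsign ?\<sigma> (map gold b)))"
    using pp b \<sigma> by (simp add: permute_list_rsign permute_list_inv signs4_iff)
  finally show "x \<in> ?F"
    using p permute_list_signs4[OF permutes_inv[OF pp] \<sigma>] by blast
next
  fix x assume "x \<in> ?F"
  then obtain p \<sigma> where p: "p \<in> alt4" and \<sigma>: "\<sigma> \<in> set signs4"
    and x: "x = mk (sqrt (2 * tau)) (permute_list p (rsign \<sigma> (map gold b)))"
    by blast
  have pp: "p permutes {..<4}"
    using p by (rule alt4_permutes)
  let ?\<sigma> = "permute_list p \<sigma>"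
  have "x = embed (sperm p ?\<sigma> b)"
    unfolding x embed_def using map_gold_sperm pp b \<sigma> by (simp add: permute_list_rsign signs4_iff)
  moreover have "sperm p ?\<sigma> b \<in> orbits [b]"
    unfolding orbits_def symmetries_def using p permute_list_signs4[OF pp \<sigma>] by auto
  ultimately show "x \<in> embed ` orbits [b]"
    by blast
qed

lemma signs4_cases:
  assumes "\<sigma> \<in> set signs4"
  obtains a b c d where "\<sigma> = [a, b, c, d]" "a \<in> {1, -1}" "b \<in> {1, -1}" "c \<in> {1, -1}" "d \<in> {1, -1}"
proof -
  obtain a b c d where "\<sigma> = [a, b, c, d]"
    using assms length_4_cases unfolding signs4_iff by blast
  with assms that show ?thesis
    by (simp add: signs4_iff)
qed

lemma real_sign_of_int: "s \<in> {-1, 1 :: real} \<Longrightarrow> \<exists>t\<in>{1, -1}. s = of_int t"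
  by (auto intro: bexI[of _ 1] bexI[of _ "-1"])

lemma real_signs4:
  assumes "a \<in> {-1, 1}" "b \<in> {-1, 1}" "c \<in> {-1, 1}" "d \<in> {-1, 1 :: real}"
  shows "\<exists>\<sigma>\<in>set signs4. [a, b, c, d] = map of_int \<sigma>"
  using assms by (intro bexI[of _ "map (\<lambda>s. if s = 1 then 1 else -1) [a, b, c, d]"]) (auto simp: signs4_iff)

lemma signs4_intro: "a \<in> {1, -1} \<Longrightarrow> b \<in> {1, -1} \<Longrightarrow> c \<in> {1, -1} \<Longrightarrow> d \<in> {1, -1} \<Longrightarrow> [a, b, c, d] \<in> set signs4"
  by (simp add: signs4_iff)

lemma permute_list_replicate:
  assumes "p permutes {..<n}"
  shows "permute_list p (replicate n x) = replicate n x"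
proof (rule nth_equalityI)
  fix i assume "i < length (permute_list p (replicate n x))"
  then have "i < n" "p i < n"
    using permutes_in_image[OF assms, of i] by simp_all
  then show "permute_list p (replicate n x) ! i = replicate n x ! i"
    using assms by (simp add: permute_list_nth)
qed simp

lemma id_alt4: "id \<in> alt4"
  unfolding alt4_def by (simp add: permutes_id)

lemma family_A:
  "{mk (sqrt (2 * tau)) xs | xs s. s \<in> {-1, 1} \<and> mset xs = mset [s * 2, 0, 0, 0]} = embed ` orbits [zbase_A]"
proof -
  have key: "(\<exists>s. s \<in> {-1, 1} \<and> mset xs = mset [s * 2, 0, 0, 0]) \<longleftrightarrow>
        (\<exists>p \<sigma>. p \<in> alt4 \<and> \<sigma> \<in> set signs4 \<and> xs = permute_list p (rsign \<sigma> [2, 0, 0, 0]))" for xs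
  proof
    assume "\<exists>s. s \<in> {-1, 1} \<and> mset xs = mset [s * 2, 0, 0, 0]"
    then obtain s where s: "s \<in> {-1, 1}" and "mset xs = mset [s * 2, 0, 0, 0]"
      by blast
    then obtain q where "q permutes {..<length [s * 2, 0, 0, 0]}" and "permute_list q [s * 2, 0, 0, 0] = xs"
      using mset_eq_permutation by metis
    then have q: "q permutes {..<4}" and xs: "xs = permute_list q [s * 2, 0, 0, 0]"
      by (simp_all add: numeral_eq_Suc)
    text \<open>The transposition of the two last zero entries repairs the parity of \<open>q\<close>.\<close>
    define p where "p = (if evenperm q then q else Transposition.transpose 1 2 \<circ> q)"
    have "permutation q"
      using q permutation_permutes by blast
    then have "p \<in> alt4"
      unfolding p_def alt4_def using q
      by (auto simp: evenperm_comp permutation_swap_id evenperm_swap permutes_compose permutes_swap_id)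
    moreover have "xs = permute_list p [s * 2, 0, 0, 0]"
      unfolding xs p_def using q
      by (auto simp: permute_list_compose) (simp add: permute_list_def Transposition.transpose_def)
    moreover obtain t where t: "t \<in> {1, -1}" "s = of_int t"
      using real_sign_of_int[OF s] by blast
    then have "[s * 2, 0, 0, 0] = rsign [t, 1, 1, 1] [2, 0, 0, 0]"
      by (simp add: rsign_def)
    ultimately show "\<exists>p \<sigma>. p \<in> alt4 \<and> \<sigma> \<in> set signs4 \<and> xs = permute_list p (rsign \<sigma> [2, 0, 0, 0])"
      using signs4_intro[of t 1 1 1] t by auto
  next
    assume "\<exists>p \<sigma>. p \<in> alt4 \<and> \<sigma> \<in> set signs4 \<and> xs = permute_list p (rsign \<sigma> [2, 0, 0, 0])"
    then obtain p \<sigma> where p: "p \<in> alt4" and \<sigma>: "\<sigma> \<in> set signs4"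
      and xs: "xs = permute_list p (rsign \<sigma> [2, 0, 0, 0])"
      by blast
    obtain a b c d where \<sigma>_eq: "\<sigma> = [a, b, c, d]" and a: "a \<in> {1, -1}"
      using \<sigma> signs4_cases by metis
    have "mset xs = mset [of_int a * 2, 0, 0, 0]"
      unfolding xs \<sigma>_eq using alt4_permutes[OF p] by (simp add: rsign_def numeral_eq_Suc)
    then show "\<exists>s. s \<in> {-1, 1} \<and> mset xs = mset [s * 2, 0, 0, 0]"
      using a by (intro exI[of _ "of_int a"]) auto
  qed
  have gold: "map gold zbase_A = [2, 0, 0, 0]"
    by (simp add: zbase_A_def)
  show ?thesis
    unfolding embed_orbits[OF length_zbase(1)] gold
  proof (intro set_eqI iffI)
    fix x assume "x \<in> {mk (sqrt (2 * tau)) xs | xs s. s \<in> {-1, 1} \<and> mset xs = mset [s * 2, 0, 0, 0]}"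
    then obtain xs s where "x = mk (sqrt (2 * tau)) xs" "s \<in> {-1, 1}" "mset xs = mset [s * 2, 0, 0, 0]"
      by blast
    then show "x \<in> {mk (sqrt (2 * tau)) (permute_list p (rsign \<sigma> [2, 0, 0, 0])) | p \<sigma>. p \<in> alt4 \<and> \<sigma> \<in> set signs4}"
      using key[of xs] by blast
  next
    fix x assume "x \<in> {mk (sqrt (2 * tau)) (permute_list p (rsign \<sigma> [2, 0, 0, 0])) | p \<sigma>. p \<in> alt4 \<and> \<sigma> \<in> set signs4}"
    then obtain p \<sigma> where "x = mk (sqrt (2 * tau)) (permute_list p (rsign \<sigma> [2, 0, 0, 0]))" "p \<in> alt4" "\<sigma> \<in> set signs4"
      by blast
    then show "x \<in> {mk (sqrt (2 * tau)) xs | xs s. s \<in> {-1, 1} \<and> mset xs = mset [s * 2, 0, 0, 0]}"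
      using key[of "permute_list p (rsign \<sigma> [2, 0, 0, 0])"] by blast
  qed
qed

lemma family_B:
  "{mk (sqrt (2 * tau)) [a, b, c, d] | a b c d.
      a \<in> {-1, 1} \<and> b \<in> {-1, 1} \<and> c \<in> {-1, 1} \<and> d \<in> {-1, 1}} = embed ` orbits [zbase_B]"
    (is "?L = _")
proof -
  have key: "(\<exists>a b c d. xs = [a, b, c, d] \<and> a \<in> {-1, 1} \<and> b \<in> {-1, 1} \<and> c \<in> {-1, 1} \<and> d \<in> {-1, 1}) \<longleftrightarrow>
        (\<exists>p \<sigma>. p \<in> alt4 \<and> \<sigma> \<in> set signs4 \<and> xs = permute_list p (rsign \<sigma> [1, 1, 1, 1]))" for xs
  proof
    assume "\<exists>a b c d. xs = [a, b, c, d] \<and> a \<in> {-1, 1} \<and> b \<in> {-1, 1} \<and> c \<in> {-1, 1} \<and> d \<in> {-1, 1}"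
    then obtain a b c d where xs: "xs = [a, b, c, d]" and signs: "a \<in> {-1, 1}" "b \<in> {-1, 1}" "c \<in> {-1, 1}" "d \<in> {-1, 1}"
      by blast
    obtain \<sigma> where \<sigma>: "\<sigma> \<in> set signs4" and eq: "[a, b, c, d] = map of_int \<sigma>"
      using real_signs4[OF signs] by (rule bexE)
    obtain ta tb tc td where "\<sigma> = [ta, tb, tc, td]"
      using signs4_cases[OF \<sigma>] by metis
    then have "xs = permute_list id (rsign \<sigma> [1, 1, 1, 1])"
      using eq unfolding xs by (simp add: rsign_def)
    then show "\<exists>p \<sigma>. p \<in> alt4 \<and> \<sigma> \<in> set signs4 \<and> xs = permute_list p (rsign \<sigma> [1, 1, 1, 1])"
      using id_alt4 \<sigma> by blast
  next
    assume "\<exists>p \<sigma>. p \<in> alt4 \<and> \<sigma> \<in> set signs4 \<and> xs = permute_list p (rsign \<sigma> [1, 1, 1, 1])"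
    then obtain p \<sigma> where p: "p \<in> alt4" and \<sigma>: "\<sigma> \<in> set signs4"
      and xs: "xs = permute_list p (rsign \<sigma> [1, 1, 1, 1])"
      by blast
    have pp: "p permutes {..<4}"
      using p by (rule alt4_permutes)
    obtain a b c d where \<sigma>': "permute_list p \<sigma> = [a, b, c, d]"
      and signs: "a \<in> {1, -1}" "b \<in> {1, -1}" "c \<in> {1, -1}" "d \<in> {1, -1}"
      using signs4_cases[OF permute_list_signs4[OF pp \<sigma>]] by metis
    have ones: "[1, 1, 1, 1] = replicate 4 (1::real)"
      by (simp add: numeral_eq_Suc)
    have "xs = rsign (permute_list p \<sigma>) (permute_list p [1, 1, 1, 1])"
      unfolding xs ones using pp \<sigma> by (intro permute_list_rsign) (simp_all add: signs4_iff)
    also have "\<dots> = [of_int a, of_int b, of_int c, of_int d]"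
      unfolding \<sigma>' ones permute_list_replicate[OF pp] by (simp add: rsign_def numeral_eq_Suc)
    finally have "xs = [of_int a, of_int b, of_int c, of_int d]" .
    then show "\<exists>a b c d. xs = [a, b, c, d] \<and> a \<in> {-1, 1} \<and> b \<in> {-1, 1} \<and> c \<in> {-1, 1} \<and> d \<in> {-1, 1}"
      using signs by auto
  qed
  have gold: "map gold zbase_B = [1, 1, 1, 1]"
    by (simp add: zbase_B_def)
  show ?thesis
    unfolding embed_orbits[OF length_zbase(2)] gold
  proof (intro set_eqI iffI)
    fix x assume "x \<in> ?L"
    then obtain a b c d where "x = mk (sqrt (2 * tau)) [a, b, c, d]"
      and "a \<in> {-1, 1} \<and> b \<in> {-1, 1} \<and> c \<in> {-1, 1} \<and> d \<in> {-1, 1}"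
      by blast
    moreover obtain p \<sigma> where "p \<in> alt4" "\<sigma> \<in> set signs4" "[a, b, c, d] = permute_list p (rsign \<sigma> [1, 1, 1, 1])"
      using key[of "[a, b, c, d]"] calculation by auto
    ultimately show "x \<in> {mk (sqrt (2 * tau)) (permute_list p (rsign \<sigma> [1, 1, 1, 1])) | p \<sigma>. p \<in> alt4 \<and> \<sigma> \<in> set signs4}"
      by auto
  next
    fix x assume "x \<in> {mk (sqrt (2 * tau)) (permute_list p (rsign \<sigma> [1, 1, 1, 1])) | p \<sigma>. p \<in> alt4 \<and> \<sigma> \<in> set signs4}"
    then obtain p \<sigma> where "x = mk (sqrt (2 * tau)) (permute_list p (rsign \<sigma> [1, 1, 1, 1]))" "p \<in> alt4" "\<sigma> \<in> set signs4"
      by blast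
    moreover obtain a b c d where "permute_list p (rsign \<sigma> [1, 1, 1, 1]) = [a, b, c, d]"
      and "a \<in> {-1, 1}" "b \<in> {-1, 1}" "c \<in> {-1, 1}" "d \<in> {-1, 1}"
      using key[of "permute_list p (rsign \<sigma> [1, 1, 1, 1])"] calculation by auto
    ultimately show "x \<in> ?L"
      by auto
  qed
qed

lemma family_C:
  "{mk (sqrt (2 * tau)) (permute_list p [s1 * tau, s2, s3 / tau, 0]) | p s1 s2 s3.
      p permutes {..<4} \<and> evenperm p \<and> s1 \<in> {-1, 1} \<and> s2 \<in> {-1, 1} \<and> s3 \<in> {-1, 1}}
    = embed ` orbits [zbase_C]" (is "?L = _")
proof -
  have divide_tau: "x / tau = x * (tau - 1)" for x
    using inverse_tau by (metis times_divide_eq_right mult_1_right)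
  have key: "(\<exists>s1 s2 s3. s1 \<in> {-1, 1} \<and> s2 \<in> {-1, 1} \<and> s3 \<in> {-1, 1} \<and> xs = [s1 * tau, s2, s3 / tau, 0]) \<longleftrightarrow>
        (\<exists>\<sigma>. \<sigma> \<in> set signs4 \<and> xs = rsign \<sigma> [tau, 1, tau - 1, 0])" for xs
  proof
    assume "\<exists>s1 s2 s3. s1 \<in> {-1, 1} \<and> s2 \<in> {-1, 1} \<and> s3 \<in> {-1, 1} \<and> xs = [s1 * tau, s2, s3 / tau, 0]"
    then obtain s1 s2 s3 where signs: "s1 \<in> {-1, 1}" "s2 \<in> {-1, 1}" "s3 \<in> {-1, 1}"
      and xs: "xs = [s1 * tau, s2, s3 / tau, 0]"
      by blast
    obtain \<sigma> where \<sigma>: "\<sigma> \<in> set signs4" and eq: "[s1, s2, s3, 1] = map of_int \<sigma>"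
      using real_signs4[of s1 s2 s3 1] signs by (auto elim: bexE)
    obtain t1 t2 t3 t4 where "\<sigma> = [t1, t2, t3, t4]"
      using signs4_cases[OF \<sigma>] by metis
    then have "xs = rsign \<sigma> [tau, 1, tau - 1, 0]"
      using eq unfolding xs by (simp add: rsign_def divide_tau)
    then show "\<exists>\<sigma>. \<sigma> \<in> set signs4 \<and> xs = rsign \<sigma> [tau, 1, tau - 1, 0]"
      using \<sigma> by blast
  next
    assume "\<exists>\<sigma>. \<sigma> \<in> set signs4 \<and> xs = rsign \<sigma> [tau, 1, tau - 1, 0]"
    then obtain \<sigma> where \<sigma>: "\<sigma> \<in> set signs4" and xs: "xs = rsign \<sigma> [tau, 1, tau - 1, 0]"
      by blast
    obtain a b c d where \<sigma>_eq: "\<sigma> = [a, b, c, d]" and signs: "a \<in> {1, -1}" "b \<in> {1, -1}" "c \<in> {1, -1}"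
      using signs4_cases[OF \<sigma>] by metis
    have "xs = [of_int a * tau, of_int b, of_int c / tau, 0]"
      unfolding xs \<sigma>_eq by (simp add: rsign_def divide_tau)
    with signs show "\<exists>s1 s2 s3. s1 \<in> {-1, 1} \<and> s2 \<in> {-1, 1} \<and> s3 \<in> {-1, 1} \<and> xs = [s1 * tau, s2, s3 / tau, 0]"
      by (intro exI[of _ "of_int a"] exI[of _ "of_int b"] exI[of _ "of_int c"]) auto
  qed
  have gold: "map gold zbase_C = [tau, 1, tau - 1, 0]"
    by (simp add: zbase_C_def)
  show ?thesis
    unfolding embed_orbits[OF length_zbase(3)] gold alt4_def
  proof (intro set_eqI iffI)
    fix x assume "x \<in> ?L"
    then obtain p s1 s2 s3 where "x = mk (sqrt (2 * tau)) (permute_list p [s1 * tau, s2, s3 / tau, 0])"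
      and "p permutes {..<4} \<and> evenperm p" and "s1 \<in> {-1, 1} \<and> s2 \<in> {-1, 1} \<and> s3 \<in> {-1, 1}"
      by blast
    moreover obtain \<sigma> where "\<sigma> \<in> set signs4" "[s1 * tau, s2, s3 / tau, 0] = rsign \<sigma> [tau, 1, tau - 1, 0]"
      using key[of "[s1 * tau, s2, s3 / tau, 0]"] calculation by auto
    ultimately show "x \<in> {mk (sqrt (2 * tau)) (permute_list p (rsign \<sigma> [tau, 1, tau - 1, 0])) | p \<sigma>.
        p \<in> {p. p permutes {..<4} \<and> evenperm p} \<and> \<sigma> \<in> set signs4}"
      by auto
  next
    fix x assume "x \<in> {mk (sqrt (2 * tau)) (permute_list p (rsign \<sigma> [tau, 1, tau - 1, 0])) | p \<sigma>.
        p \<in> {p. p permutes {..<4} \<and> evenperm p} \<and> \<sigma> \<in> set signs4}"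
    then obtain p \<sigma> where "x = mk (sqrt (2 * tau)) (permute_list p (rsign \<sigma> [tau, 1, tau - 1, 0]))"
      and "p permutes {..<4} \<and> evenperm p" and "\<sigma> \<in> set signs4"
      by blast
    moreover obtain s1 s2 s3 where "rsign \<sigma> [tau, 1, tau - 1, 0] = [s1 * tau, s2, s3 / tau, 0]"
      and "s1 \<in> {-1, 1}" "s2 \<in> {-1, 1}" "s3 \<in> {-1, 1}"
      using key[of "rsign \<sigma> [tau, 1, tau - 1, 0]"] calculation by auto
    ultimately show "x \<in> ?L"
      by auto
  qed
qed

lemma normals_eq: "normals = embed ` znormals"
proof -
  have "znormals = orbits [zbase_A] \<union> orbits [zbase_B] \<union> orbits [zbase_C]"
    unfolding znormals_def orbits_def by auto
  then show ?thesis
    unfolding normals_def family_A family_B family_C by auto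
qed

lemma normal_first: "n \<in> normals \<Longrightarrow> n $ 1 = sqrt (2 * tau)"
  unfolding normals_eq embed_def by auto

lemma normal_self: "n \<in> normals \<Longrightarrow> mink n n = 4 - 2 * tau"
  unfolding normals_eq using gdot_znormals_self length_znormals mink_embed by auto

lemma mink_embed_cases:
  assumes "v \<in> znormals" "w \<in> znormals" "v \<noteq> w"
  shows "mink (embed v) (embed w) = 0 \<or> mink (embed v) (embed w) \<le> 2 - 2 * tau"
proof -
  have "gdot v w = (0, 2) \<or> gold_le_2_cert (gdot v w)"
    using znormals_cases[OF assms(1,2)] assms(3) unfolding zadj_def by blast
  then have "gold (gdot v w) = 2 * tau \<or> gold (gdot v w) \<le> 2"
    using gold_le_2_certD[of "gdot v w"] by auto
  then show ?thesis
    using assms by (auto simp: mink_embed length_znormals)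
qed

lemma inj_on_embed: "inj_on embed znormals"
proof (rule inj_onI)
  fix v w assume v: "v \<in> znormals" and w: "w \<in> znormals" and eq: "embed v = embed w"
  show "v = w"
  proof (rule ccontr)
    assume "v \<noteq> w"
    then have "mink (embed v) (embed w) = 0 \<or> mink (embed v) (embed w) \<le> 2 - 2 * tau"
      using mink_embed_cases v w by blast
    moreover have "mink (embed v) (embed w) = 4 - 2 * tau"
      using normal_self[of "embed w"] w unfolding eq normals_eq by blast
    ultimately show False
      using tau_bounds by auto
  qed
qed

lemma normals_cases:
  assumes "n \<in> normals" "m \<in> normals" "n \<noteq> m"
  shows "mink n m = 0 \<or> mink n m \<le> 2 - 2 * tau"
  using assms mink_embed_cases unfolding normals_eq by blast

section \<open>Walls\<close>

lemma mink_commute: "mink x y = mink y x"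
  by (simp add: mink_def algebra_simps)

lemma mink_add_left: "mink (x + y) z = mink x z + mink y z"
  by (simp add: mink_def algebra_simps)

lemma mink_add_right: "mink z (x + y) = mink z x + mink z y"
  by (simp add: mink_def algebra_simps)

lemma mink_scaleR_left: "mink (a *\<^sub>R x) z = a * mink x z"
  by (simp add: mink_def algebra_simps)

lemma mink_scaleR_right: "mink z (a *\<^sub>R x) = a * mink z x"
  by (simp add: mink_def algebra_simps)

lemma mink_zero_left: "mink 0 z = 0"
  by (simp add: mink_def)

lemma mink_sum_left: "mink (sum f F) z = (\<Sum>n\<in>F. mink (f n) z)"
  by (induction F rule: infinite_finite_induct) (simp_all add: mink_add_left mink_zero_left)

lemma lagrange_identity_4:
  fixes a1 a2 a3 a4 b1 b2 b3 b4 :: real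
  shows "(a1*b1 + a2*b2 + a3*b3 + a4*b4)\<^sup>2 \<le> (a1\<^sup>2 + a2\<^sup>2 + a3\<^sup>2 + a4\<^sup>2) * (b1\<^sup>2 + b2\<^sup>2 + b3\<^sup>2 + b4\<^sup>2)"
proof -
  have "(a1\<^sup>2 + a2\<^sup>2 + a3\<^sup>2 + a4\<^sup>2) * (b1\<^sup>2 + b2\<^sup>2 + b3\<^sup>2 + b4\<^sup>2) - (a1*b1 + a2*b2 + a3*b3 + a4*b4)\<^sup>2 =
      (a1*b2 - a2*b1)\<^sup>2 + (a1*b3 - a3*b1)\<^sup>2 + (a1*b4 - a4*b1)\<^sup>2 + (a2*b3 - a3*b2)\<^sup>2 +
      (a2*b4 - a4*b2)\<^sup>2 + (a3*b4 - a4*b3)\<^sup>2"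
    by (simp add: power2_eq_square algebra_simps)
  also have "\<dots> \<ge> 0"
    by simp
  finally show ?thesis
    by simp
qed

text \<open>A timelike vector is orthogonal to no point of \<open>\<bbbH>\<^sup>4\<close> (reverse Cauchy-Schwarz).\<close>

lemma H4_not_orthogonal_timelike:
  assumes x: "x \<in> H4" and u: "mink u u < 0"
  shows "mink x u \<noteq> 0"
proof
  assume orth: "mink x u = 0"
  define X where "X = (x$2)\<^sup>2 + (x$3)\<^sup>2 + (x$4)\<^sup>2 + (x$5)\<^sup>2"
  define U where "U = (u$2)\<^sup>2 + (u$3)\<^sup>2 + (u$4)\<^sup>2 + (u$5)\<^sup>2"
  have X: "(x$1)\<^sup>2 = 1 + X"
    using x unfolding H4_def mink_def X_def by (simp add: power2_eq_square)
  have U: "U < (u$1)\<^sup>2"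
    using u unfolding mink_def U_def by (simp add: power2_eq_square)
  have "x$1 * u$1 = x$2 * u$2 + x$3 * u$3 + x$4 * u$4 + x$5 * u$5"
    using orth unfolding mink_def by simp
  then have "(x$1 * u$1)\<^sup>2 \<le> X * U"
    using lagrange_identity_4[of "x$2" "u$2" "x$3" "u$3" "x$4" "u$4" "x$5" "u$5"]
    unfolding X_def U_def by simp
  also have "\<dots> \<le> X * (u$1)\<^sup>2"
    using U unfolding X_def by (intro mult_left_mono) auto
  also have "\<dots> < (x$1)\<^sup>2 * (u$1)\<^sup>2"
  proof (rule mult_strict_right_mono)
    show "X < (x$1)\<^sup>2"
      using X by simp
    have "0 \<le> U"
      unfolding U_def by simp
    then show "0 < (u$1)\<^sup>2"
      using U by linarith
  qed
  finally show False
    by (simp add: power_mult_distrib)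
qed

lemma scaled_to_H4:
  assumes "y$1 > 0" "mink y y < 0"
  shows "(1 / sqrt (- mink y y)) *\<^sub>R y \<in> H4"
proof -
  let ?r = "sqrt (- mink y y)"
  have "?r > 0" "?r * ?r = - mink y y"
    using assms by simp_all
  then have "mink ((1 / ?r) *\<^sub>R y) ((1 / ?r) *\<^sub>R y) = -1"
    by (simp add: mink_scaleR_left mink_scaleR_right field_simps)
  then show ?thesis
    unfolding H4_def using assms \<open>?r > 0\<close> by simp
qed

text \<open>Given pairwise orthogonal normals \<open>F\<close>, the point \<open>a \<cdot> (1,0,0,0,0) + \<Sum>F\<close>, rescaled into \<open>\<bbbH>\<^sup>4\<close>,
  lies on the walls of \<open>F\<close> and strictly inside all other half-spaces.\<close>

lemma face_point:
  assumes F: "finite F" "F \<subseteq> normals" and orth: "\<And>n m. n \<in> F \<Longrightarrow> m \<in> F \<Longrightarrow> n \<noteq> m \<Longrightarrow> mink n m = 0"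
  shows "\<exists>x\<in>cell120. (\<forall>n\<in>F. mink x n = 0) \<and> (\<forall>m\<in>normals - F. mink x m < 0)"
proof -
  define c where "c = sqrt (2 * tau)"
  define a where "a = (4 - 2 * tau) / c"
  define e where "e = mk 1 [0, 0, 0, 0]"
  define y where "y = a *\<^sub>R e + sum id F"
  have c: "c > 0"
    unfolding c_def using tau_bounds by simp
  have a: "a > 0" "a * c = 4 - 2 * tau"
    unfolding a_def using c tau_bounds by simp_all
  have mink_e: "mink e z = - z$1" for z
    unfolding e_def by (simp add: mink_def)
  have mink_y: "mink y m = (\<Sum>n\<in>F. mink n m) - (4 - 2 * tau)" if "m \<in> normals" for m
  proof -
    have "mink y m = a * mink e m + (\<Sum>n\<in>F. mink n m)"
      unfolding y_def by (simp add: mink_add_left mink_scaleR_left mink_sum_left)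
    then show ?thesis
      using mink_e normal_first[OF that] a(2) unfolding c_def by simp
  qed
  have on_F: "mink y m = 0" if "m \<in> F" for m
  proof -
    have "(\<Sum>n\<in>F. mink n m) = mink m m"
      using F orth that by (subst sum.remove[of F m]) (auto intro!: sum.neutral)
    then show ?thesis
      using mink_y normal_self that F by auto
  qed
  have off_F: "mink y m < 0" if "m \<in> normals" "m \<notin> F" for m
  proof -
    have "mink n m \<le> 0" if "n \<in> F" for n
      using normals_cases[of n m] \<open>m \<in> normals\<close> \<open>m \<notin> F\<close> that F tau_bounds by force
    then have "(\<Sum>n\<in>F. mink n m) \<le> 0"
      by (rule sum_nonpos)
    then show ?thesis
      using mink_y[OF that(1)] tau_bounds by simp
  qed
  have y1: "y$1 > 0"
  proof -
    have "(sum id F)$1 = of_nat (card F) * c"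
      using F normal_first unfolding c_def by (simp add: subset_iff)
    then show ?thesis
      unfolding y_def e_def using a c by (simp add: add_pos_nonneg)
  qed
  have "mink y y = a * mink e y + (\<Sum>n\<in>F. mink n y)"
    unfolding y_def by (simp add: mink_add_left mink_scaleR_left mink_sum_left)
  also have "\<dots> = - a * y$1"
  proof -
    have "mink n y = 0" if "n \<in> F" for n
      using on_F[OF that] mink_commute by metis
    then show ?thesis
      by (simp add: mink_e)
  qed
  finally have yy: "mink y y < 0"
    using a y1 by simp
  define x where "x = (1 / sqrt (- mink y y)) *\<^sub>R y"
  have mink_x: "mink x m = mink y m / sqrt (- mink y y)" for m
    unfolding x_def by (simp add: mink_scaleR_left)
  have "x \<in> H4"
    unfolding x_def using scaled_to_H4[OF y1 yy] .
  moreover have "mink x m \<le> 0" if "m \<in> normals" for m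
    unfolding mink_x using on_F off_F[OF that] yy by (cases "m \<in> F") (auto simp: divide_nonpos_pos)
  ultimately have "x \<in> cell120"
    unfolding cell120_def by blast
  moreover have "\<forall>n\<in>F. mink x n = 0"
    unfolding mink_x using on_F by simp
  moreover have "\<forall>m\<in>normals - F. mink x m < 0"
    unfolding mink_x using off_F yy by (simp add: divide_neg_pos)
  ultimately show ?thesis
    by blast
qed

lemma inj_on_wall: "inj_on wall normals"
proof (rule inj_onI)
  fix n m assume n: "n \<in> normals" and m: "m \<in> normals" and eq: "wall n = wall m"
  obtain x where x: "x \<in> wall n" and off: "\<forall>q\<in>normals - {n}. mink x q < 0"
    using face_point[of "{n}"] n unfolding wall_def by auto
  show "n = m"
  proof (rule ccontr)
    assume "n \<noteq> m"
    then have "mink x m < 0"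
      using off m by blast
    moreover have "x \<in> wall m"
      using x eq by simp
    then have "mink x m = 0"
      unfolding wall_def by blast
    ultimately show False
      by simp
  qed
qed

lemma walls_meet:
  assumes "n \<in> normals" "m \<in> normals" "mink n m = 0"
  shows "wall n \<inter> wall m \<noteq> {}"
proof -
  have "n \<noteq> m"
    using assms normal_self[of n] tau_bounds by auto
  then have "\<exists>x\<in>cell120. (\<forall>q\<in>{n, m}. mink x q = 0) \<and> (\<forall>q\<in>normals - {n, m}. mink x q < 0)"
    using assms by (intro face_point) (auto simp: mink_commute)
  then show ?thesis
    unfolding wall_def by auto
qed

lemma walls_disjoint:
  assumes n: "n \<in> normals" and m: "m \<in> normals" and far: "mink n m \<le> 2 - 2 * tau"
  shows "wall n \<inter> wall m = {}"
proof (rule equals0I)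
  fix x assume "x \<in> wall n \<inter> wall m"
  then have x: "x \<in> H4" "mink x (n + m) = 0"
    unfolding wall_def cell120_def by (auto simp: mink_add_right)
  have "mink (n + m) (n + m) = mink n n + 2 * mink n m + mink m m"
    by (simp add: mink_def algebra_simps)
  then have "mink (n + m) (n + m) < 0"
    using normal_self[OF n] normal_self[OF m] far tau_bounds by simp
  then show False
    using H4_not_orthogonal_timelike x by blast
qed

section \<open>Independent sets in graphs with small neighbourhoods\<close>

lemma independent_set_bound:
  fixes A :: "'a \<Rightarrow> 'a \<Rightarrow> bool"
  assumes V: "finite V" and sym: "\<And>a b. A a b \<Longrightarrow> A b a"
    and deg: "\<And>v. v \<in> V \<Longrightarrow> d \<le> card {u \<in> V. A v u}"
    and loc: "\<And>v T. v \<in> V \<Longrightarrow> T \<subseteq> {u \<in> V. A v u} \<Longrightarrow> \<forall>a\<in>T. \<forall>b\<in>T. \<not> A a b \<Longrightarrow> card T \<le> c"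
    and S: "S \<subseteq> V" "\<forall>a\<in>S. \<forall>b\<in>S. \<not> A a b"
  shows "d * card S \<le> c * (card V - card S)"
proof -
  have fin: "finite S" "finite (V - S)"
    using S V finite_subset by auto
  have "d * card S \<le> (\<Sum>s\<in>S. card {u \<in> V. A s u})"
    using deg S sum_bounded_below[of S d "\<lambda>s. card {u \<in> V. A s u}"] by (auto simp: mult.commute)
  also have "\<dots> = (\<Sum>s\<in>S. \<Sum>u\<in>V - S. of_bool (A s u))"
  proof (rule sum.cong)
    fix s assume "s \<in> S"
    then have "{u \<in> V. A s u} = (V - S) \<inter> {u. A s u}"
      using S by auto
    then show "card {u \<in> V. A s u} = (\<Sum>u\<in>V - S. of_bool (A s u))"
      using fin by simp
  qed simp
  also have "\<dots> = (\<Sum>u\<in>V - S. \<Sum>s\<in>S. of_bool (A s u))"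
    by (rule sum.swap)
  also have "\<dots> = (\<Sum>u\<in>V - S. card {s \<in> S. A u s})"
  proof (rule sum.cong)
    fix u
    have "S \<inter> {s. A s u} = {s \<in> S. A u s}"
      using sym by auto
    then show "(\<Sum>s\<in>S. of_bool (A s u)) = card {s \<in> S. A u s}"
      using fin by simp
  qed simp
  also have "\<dots> \<le> (\<Sum>u\<in>V - S. c)"
    by (rule sum_mono) (use S in \<open>auto intro!: loc\<close>)
  also have "\<dots> = c * (card V - card S)"
    using card_Diff_subset[OF fin(1) S(1)] by simp
  finally show ?thesis .
qed

lemma walls_eq: "walls = wall ` embed ` znormals"
  unfolding walls_def normals_eq ..

lemma pairwise_disjoint_walls_z24: "pairwise_disjoint_walls (wall ` embed ` z24)"
  unfolding pairwise_disjoint_walls_def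
proof (intro conjI ballI impI)
  show "wall ` embed ` z24 \<subseteq> walls"
    using z24_subset unfolding walls_eq by blast
  fix A B assume "A \<in> wall ` embed ` z24" "B \<in> wall ` embed ` z24" "A \<noteq> B"
  then obtain v w where v: "v \<in> z24" and w: "w \<in> z24" and AB: "A = wall (embed v)" "B = wall (embed w)"
    and "v \<noteq> w"
    by blast
  then have "gold (gdot v w) \<le> 2"
    using z24_cases gold_le_2_certD by blast
  then have "mink (embed v) (embed w) \<le> 2 - 2 * tau"
    using v w z24_subset by (simp add: mink_embed length_znormals subset_iff)
  then show "A \<inter> B = {}"
    unfolding AB using v w z24_subset by (intro walls_disjoint) (auto simp: normals_eq)
qed

lemma card_walls_z24: "card (wall ` embed ` z24) = 24"
proof -
  have "inj_on embed z24"
    using inj_on_embed z24_subset by (rule inj_on_subset)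
  moreover have "inj_on wall (embed ` z24)"
    using inj_on_wall z24_subset unfolding normals_eq by (blast intro: inj_on_subset)
  ultimately show ?thesis
    using card_z24 by (simp add: card_image)
qed

lemma card_pairwise_disjoint_walls:
  assumes W: "pairwise_disjoint_walls W"
  shows "card W \<le> 24"
proof -
  define S where "S = {v \<in> znormals. wall (embed v) \<in> W}"
  have "W = wall ` embed ` S"
    using W unfolding pairwise_disjoint_walls_def walls_eq S_def by blast
  moreover have "finite S"
    using finite_orbits unfolding S_def znormals_def by (auto intro: rev_finite_subset)
  ultimately have "card W \<le> card S"
    by (metis card_image_le finite_imageI image_image)
  have independent: "\<forall>a\<in>S. \<forall>b\<in>S. \<not> zadj a b"
  proof (intro ballI notI)
    fix a b assume a: "a \<in> S" and b: "b \<in> S" and "zadj a b"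
    then have "mink (embed a) (embed b) = 0"
      unfolding S_def zadj_def by (simp add: mink_embed length_znormals)
    moreover have normals: "embed a \<in> normals" "embed b \<in> normals"
      using a b unfolding S_def normals_eq by auto
    ultimately have meet: "wall (embed a) \<inter> wall (embed b) \<noteq> {}"
      by (rule walls_meet[rotated 2])
    show False
    proof (cases "wall (embed a) = wall (embed b)")
      case True
      then have "embed a = embed b"
        using inj_on_wall normals by (blast dest: inj_onD)
      then show False
        using \<open>mink (embed a) (embed b) = 0\<close> normal_self[OF normals(1)] tau_bounds by simp
    next
      case False
      then show False
        using W meet a b unfolding S_def pairwise_disjoint_walls_def by blast
    qed
  qed
  have "12 * card S \<le> 3 * (card znormals - card S)"
  proof (rule independent_set_bound)
    show "finite znormals"
      unfolding znormals_def by (rule finite_orbits)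
    show "zadj a b \<Longrightarrow> zadj b a" for a b
      by (simp add: zadj_commute)
    show "12 \<le> card {u \<in> znormals. zadj v u}" if "v \<in> znormals" for v
      using zneighbours(1)[OF that] by simp
    show "card T \<le> 3" if "v \<in> znormals" "T \<subseteq> {u \<in> znormals. zadj v u}" "\<forall>a\<in>T. \<forall>b\<in>T. \<not> zadj a b" for v T
      using zneighbours(2) that by blast
    show "S \<subseteq> znormals"
      unfolding S_def by blast
  qed (rule independent)
  then show ?thesis
    using card_znormals \<open>card W \<le> card S\<close> by linarith
qed

theorem proposition3p1:
  shows "(\<exists>W. pairwise_disjoint_walls W \<and> card W = 24)
       \<and> (\<forall>W. pairwise_disjoint_walls W \<longrightarrow> card W \<le> 24)"
  using pairwise_disjoint_walls_z24 card_walls_z24 card_pairwise_disjoint_walls by blast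

end
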